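(* Let $G$ be a connected graph whose girth $g$ is finite and even. Then there is an $N \in \mathbb{N}$ such that $P_{DP}(G,m) < P(G,m)$ for every integer $m \geq N$.
   Context: All graphs are finite and simple. $P(G,m)$ denotes the chromatic polynomial of $G$, i.e. the number of proper colorings of $G$ with colors from $[m]=\{1,\dots,m\}$. A cover of a graph $G$ is a pair $\mathcal{H}=(L,H)$ where $H$ is a graph and $L:V(G)\to\mathcal{P}(V(H))$ satisfies: (1) the sets $L(u)$, $u\in V(G)$, partition $V(H)$; (2) for every $u\in V(G)$, $H[L(u)]$ is complete; (3) if $E_H(L(u),L(v))\neq\emptyset$ then $u=v$ or $uv\in E(G)$; (4) if $uv\in E(G)$ then $E_H(L(u),L(v))$ is a matching (possibly empty). Here $E_H(S,U)$ is the set of edges of $H$ with one endpoint in $S$ and the other in $U$. The cover is $m$-fold if $|L(u)|=m$ for all $u$. An $\mathcal{H}$-coloring of $G$ is an independent set $I$ in $H$ with $|I|=|V(G)|$ (equivalently $|I\cap L(u)|=1$ for each $u$). $P_{DP}(G,\mathcal{H})$ is the number of $\mathcal{H}$-colorings of $G$, and the DP color function $P_{DP}(G,m)$ is the minimum of $P_{DP}(G,\mathcal{H})$ over all $m$-fold covers $\mathcal{H}$ of $G$. *)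

theory Defs
  imports Main "HOL-Library.FuncSet"
begin

definition sgraph :: "'a set \<Rightarrow> 'a set set \<Rightarrow> bool" where
  "sgraph V E \<longleftrightarrow> finite V \<and> (\<forall>e\<in>E. \<exists>x y. x \<noteq> y \<and> x \<in> V \<and> y \<in> V \<and> e = {x, y})"

definition chromatic_poly :: "'a set \<Rightarrow> 'a set set \<Rightarrow> nat \<Rightarrow> nat" where
  "chromatic_poly V E m =
     card {f \<in> V \<rightarrow>\<^sub>E {1..m}. \<forall>x\<in>V. \<forall>y\<in>V. {x, y} \<in> E \<longrightarrow> f x \<noteq> f y}"

definition connected_graph :: "'a set \<Rightarrow> 'a set set \<Rightarrow> bool" where
  "connected_graph V E \<longleftrightarrow> (\<forall>x\<in>V. \<forall>y\<in>V. (x, y) \<in> {(a, b). {a, b} \<in> E}\<^sup>*)"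

definition is_cycle :: "'a set \<Rightarrow> 'a set set \<Rightarrow> 'a list \<Rightarrow> bool" where
  "is_cycle V E xs \<longleftrightarrow> length xs \<ge> 3 \<and> distinct xs \<and> set xs \<subseteq> V \<and>
     (\<forall>i < length xs. {xs ! i, xs ! ((i + 1) mod length xs)} \<in> E)"

text \<open>Girth: length of a shortest cycle (only meaningful when a cycle exists).\<close>
definition girth :: "'a set \<Rightarrow> 'a set set \<Rightarrow> nat" where
  "girth V E = Inf {length xs | xs. is_cycle V E xs}"

definition edges_between :: "'b set set \<Rightarrow> 'b set \<Rightarrow> 'b set \<Rightarrow> 'b set set" where
  "edges_between EH S U = {e \<in> EH. \<exists>x\<in>S. \<exists>y\<in>U. e = {x, y}}"

definition is_matching :: "'b set set \<Rightarrow> bool" where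
  "is_matching M \<longleftrightarrow> (\<forall>e\<in>M. \<forall>e'\<in>M. e \<noteq> e' \<longrightarrow> e \<inter> e' = {})"

definition dp_cover :: "'a set \<Rightarrow> 'a set set \<Rightarrow> ('a \<Rightarrow> 'b set) \<Rightarrow> 'b set \<Rightarrow> 'b set set \<Rightarrow> bool" where
  "dp_cover V E L VH EH \<longleftrightarrow>
     sgraph VH EH \<and>
     (\<Union>u\<in>V. L u) = VH \<and>
     (\<forall>u\<in>V. \<forall>v\<in>V. u \<noteq> v \<longrightarrow> L u \<inter> L v = {}) \<and>
     (\<forall>u\<in>V. \<forall>x\<in>L u. \<forall>y\<in>L u. x \<noteq> y \<longrightarrow> {x, y} \<in> EH) \<and>
     (\<forall>u\<in>V. \<forall>v\<in>V. edges_between EH (L u) (L v) \<noteq> {} \<longrightarrow> u = v \<or> {u, v} \<in> E) \<and>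
     (\<forall>u\<in>V. \<forall>v\<in>V. {u, v} \<in> E \<longrightarrow> is_matching (edges_between EH (L u) (L v)))"

definition m_fold :: "'a set \<Rightarrow> ('a \<Rightarrow> 'b set) \<Rightarrow> nat \<Rightarrow> bool" where
  "m_fold V L m \<longleftrightarrow> (\<forall>u\<in>V. card (L u) = m)"

definition independent :: "'b set set \<Rightarrow> 'b set \<Rightarrow> bool" where
  "independent EH I \<longleftrightarrow> (\<forall>x\<in>I. \<forall>y\<in>I. {x, y} \<notin> EH)"

definition P_DP :: "'a set \<Rightarrow> 'b set \<Rightarrow> 'b set set \<Rightarrow> nat" where
  "P_DP V VH EH = card {I. I \<subseteq> VH \<and> independent EH I \<and> card I = card V}"

text \<open>DP colour function: minimum over all m-fold covers. Every cover is isomorphic to one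
  whose vertices have type 'a \<times> nat, so this type suffices.\<close>
definition dp_color_function :: "'a set \<Rightarrow> 'a set set \<Rightarrow> nat \<Rightarrow> nat" where
  "dp_color_function V E m =
     Inf {P_DP V VH EH | (L :: 'a \<Rightarrow> ('a \<times> nat) set) VH EH.
            dp_cover V E L VH EH \<and> m_fold V L m}"

end

theory Submission
  imports Defs
begin

(*
  Let C be a shortest cycle of G, of even length g, let ts be one of its edges and H = G - ts,
  so that the rest of C is a shortest t-s path p in H with g vertices; let n = |V|. Twist the
  edge ts of the trivial m-fold cover by a fixed-point-free permutation \<sigma> of the colours: the
  colourings of this cover are the proper colourings f of H with f s \<noteq> \<sigma> (f t), while the proper
  colourings of G are those with f s \<noteq> f t. So it suffices that for every colour b fewer proper
  colourings of H have f t = f s = b than have f t = b and f s = c \<noteq> b.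

  Inclusion-exclusion over the sets A of edges of H that are forced to be monochromatic writes
  the difference of the two counts as a signed sum. A set A not joining t to s contributes nothing
  (swap b and c on the component of s), the edge set of p contributes -m^(n-g) because p has the
  odd number g - 1 of edges, and every other A contributes at most m^(n-g-1), either because its
  shortest t-s path is longer or because it contains an edge with an endpoint off that path. Hence
  the difference is negative once m \<ge> 2^|E|.
*)

section \<open>Walks\<close>

fun walk_edges :: "'a list \<Rightarrow> 'a set set" where
  "walk_edges (u # v # w) = insert {u, v} (walk_edges (v # w))"
| "walk_edges _ = {}"

definition is_walk :: "'a set set \<Rightarrow> 'a \<Rightarrow> 'a \<Rightarrow> 'a list \<Rightarrow> bool" where
  "is_walk F x y w \<longleftrightarrow> w \<noteq> [] \<and> hd w = x \<and> last w = y \<and> walk_edges w \<subseteq> F"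

definition is_shortest_walk :: "'a set set \<Rightarrow> 'a \<Rightarrow> 'a \<Rightarrow> 'a list \<Rightarrow> bool" where
  "is_shortest_walk F x y w \<longleftrightarrow> is_walk F x y w \<and> (\<forall>w'. is_walk F x y w' \<longrightarrow> length w \<le> length w')"

definition edge_rel :: "'a set set \<Rightarrow> ('a \<times> 'a) set" where
  "edge_rel F = {(u, v). {u, v} \<in> F}"

lemma walk_edges_Cons: "walk_edges (u # w) = (if w = [] then {} else insert {u, hd w} (walk_edges w))"
  by (cases w) auto

lemma walk_edges_append:
  "walk_edges (w @ w') =
     walk_edges w \<union> walk_edges w' \<union> (if w \<noteq> [] \<and> w' \<noteq> [] then {{last w, hd w'}} else {})"
  by (induction w rule: walk_edges.induct) (auto simp: walk_edges_Cons)

lemma walk_edges_rev: "walk_edges (rev w) = walk_edges w"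
  by (induction w) (auto simp: walk_edges_append walk_edges_Cons last_rev insert_commute)

lemma walk_edge_subset_set: "e \<in> walk_edges w \<Longrightarrow> e \<subseteq> set w"
  by (induction w rule: walk_edges.induct) auto

lemma finite_walk_edges: "finite (walk_edges w)"
  by (induction w rule: walk_edges.induct) auto

lemma card_walk_edges: "distinct w \<Longrightarrow> card (walk_edges w) = length w - 1"
proof (induction w rule: walk_edges.induct)
  case (1 u v w)
  then have "{u, v} \<notin> walk_edges (v # w)"
    using walk_edge_subset_set by fastforce
  with 1 show ?case
    by (simp add: finite_walk_edges)
qed auto

lemma walk_edges_iff_nth: "e \<in> walk_edges w \<longleftrightarrow> (\<exists>i. Suc i < length w \<and> e = {w ! i, w ! Suc i})"
proof (induction w rule: walk_edges.induct)
  case (1 u v w)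
  show ?case
  proof
    assume "e \<in> walk_edges (u # v # w)"
    then consider "e = {u, v}" | i where "Suc i < length (v # w)" "e = {(v # w) ! i, (v # w) ! Suc i}"
      using 1 by auto
    then show "\<exists>i. Suc i < length (u # v # w) \<and> e = {(u # v # w) ! i, (u # v # w) ! Suc i}"
    proof cases
      case 1
      then show ?thesis by (intro exI[of _ 0]) simp
    next
      case (2 i)
      then show ?thesis by (intro exI[of _ "Suc i"]) simp
    qed
  next
    assume "\<exists>i. Suc i < length (u # v # w) \<and> e = {(u # v # w) ! i, (u # v # w) ! Suc i}"
    then obtain i where "Suc i < length (u # v # w)" "e = {(u # v # w) ! i, (u # v # w) ! Suc i}"
      by blast
    with 1 show "e \<in> walk_edges (u # v # w)"
      by (cases i) auto
  qed
qed auto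

lemma set_subset_walk_edges: "w \<noteq> [] \<Longrightarrow> set w \<subseteq> insert (hd w) (\<Union>(walk_edges w))"
  by (induction w rule: walk_edges.induct) auto

lemma walk_set_subset:
  assumes "is_walk F x y w" "x \<in> V" "\<And>e. e \<in> F \<Longrightarrow> e \<subseteq> V"
  shows "set w \<subseteq> V"
  using set_subset_walk_edges[of w] assms unfolding is_walk_def by blast

lemma is_walk_mono: "is_walk F x y w \<Longrightarrow> F \<subseteq> F' \<Longrightarrow> is_walk F' x y w"
  by (auto simp: is_walk_def)

lemma walk_length_ge_3:
  assumes w: "is_walk F x y w" and "x \<noteq> y" "{x, y} \<notin> F"
  shows "3 \<le> length w"
proof (rule ccontr)
  assume "\<not> 3 \<le> length w"
  moreover have "length w \<noteq> 0"
    using w unfolding is_walk_def by simp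
  ultimately consider "length w = 1" | "length w = 2"
    by linarith
  then show False
  proof cases
    case 1
    then have "w = [x]"
      using w unfolding is_walk_def by (cases w) auto
    then show False
      using w \<open>x \<noteq> y\<close> unfolding is_walk_def by simp
  next
    case 2
    then have "w = [x, y]"
      using w unfolding is_walk_def by (cases w; cases "tl w") auto
    then show False
      using w \<open>{x, y} \<notin> F\<close> unfolding is_walk_def by simp
  qed
qed

lemma shortest_walk_exists:
  assumes "is_walk F x y w"
  obtains w0 where "is_shortest_walk F x y w0"
  using ex_has_least_nat[of "is_walk F x y" w length] assms
  unfolding is_shortest_walk_def by blast

lemma shortest_walk_distinct:
  assumes "is_shortest_walk F x y w"
  shows "distinct w"
proof (rule ccontr)
  assume "\<not> distinct w"
  then obtain w1 u w2 w3 where w: "w = w1 @ [u] @ w2 @ [u] @ w3"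
    using not_distinct_decomp by blast
  let ?w = "w1 @ u # w3"
  have "walk_edges (u # w3) \<subseteq> walk_edges (u # w2 @ u # w3)"
    using walk_edges_append[of "u # w2" "u # w3"] by auto
  then have "walk_edges ?w \<subseteq> walk_edges w"
    unfolding w by (auto simp: walk_edges_append)
  moreover have "hd ?w = hd w" "last ?w = last w"
    unfolding w by (cases w1; simp) (cases w3; simp)
  ultimately have "is_walk F x y ?w"
    using assms unfolding is_shortest_walk_def is_walk_def by auto
  with assms have "length w \<le> length ?w"
    unfolding is_shortest_walk_def by blast
  then show False
    unfolding w by simp
qed

lemma walk_shortcut:
  assumes w: "w = w1 @ u # w2 @ v # w3" and uv: "{u, v} \<notin> walk_edges w"
  defines "w' \<equiv> w1 @ u # v # w3"
  shows "walk_edges w' \<subseteq> insert {u, v} (walk_edges w)" "hd w' = hd w" "last w' = last w"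
    "length w' < length w"
proof -
  have "w2 \<noteq> []"
    using uv unfolding w by (auto simp: walk_edges_append)
  then show "length w' < length w"
    unfolding w w'_def by simp
  have "walk_edges (v # w3) \<subseteq> walk_edges (u # w2 @ v # w3)"
    using walk_edges_append[of w2 "v # w3"] by (auto simp: walk_edges_Cons)
  then show "walk_edges w' \<subseteq> insert {u, v} (walk_edges w)"
    unfolding w w'_def by (auto simp: walk_edges_append)
  show "hd w' = hd w" "last w' = last w"
    unfolding w w'_def by (cases w1; simp) (cases w3; simp)
qed

lemma shortest_walk_no_chord_ordered:
  assumes sw: "is_shortest_walk F x y w" and "{u, v} \<in> F" "{u, v} \<notin> walk_edges w"
    and w: "w = w1 @ u # w2 @ v # w3"
  shows False
proof -
  note shortcut = walk_shortcut[OF w \<open>{u, v} \<notin> walk_edges w\<close>]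
  have "is_walk F x y (w1 @ u # v # w3)"
    using sw shortcut(1-3) \<open>{u, v} \<in> F\<close> unfolding is_shortest_walk_def is_walk_def by auto
  with sw shortcut(4) show False
    unfolding is_shortest_walk_def by fastforce
qed

lemma shortest_walk_no_chord:
  assumes sw: "is_shortest_walk F x y w" and uv: "{u, v} \<in> F" "{u, v} \<notin> walk_edges w"
    and "u \<noteq> v" "u \<in> set w" "v \<in> set w"
  shows False
proof -
  obtain w1 w' where w: "w = w1 @ u # w'"
    using split_list \<open>u \<in> set w\<close> by fast
  show False
  proof (cases "v \<in> set w'")
    case True
    then obtain w2 w3 where "w' = w2 @ v # w3"
      by (meson split_list)
    with w have "w = w1 @ u # w2 @ v # w3" by simp
    then show False
      by (rule shortest_walk_no_chord_ordered[OF sw uv])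
  next
    case False
    with w \<open>v \<in> set w\<close> \<open>u \<noteq> v\<close> have "v \<in> set w1" by simp
    then obtain w2 w3 where "w1 = w2 @ v # w3"
      by (meson split_list)
    with w have "w = w2 @ v # w3 @ u # w'" by simp
    moreover have "{v, u} \<in> F" "{v, u} \<notin> walk_edges w"
      using uv by (simp_all add: insert_commute)
    ultimately show False
      using shortest_walk_no_chord_ordered[OF sw] by metis
  qed
qed

lemma edge_rel_converse: "(edge_rel F)\<inverse> = edge_rel F"
  by (auto simp: edge_rel_def insert_commute)

lemma rtrancl_edge_rel_iff_walk: "(x, y) \<in> (edge_rel F)\<^sup>* \<longleftrightarrow> (\<exists>w. is_walk F x y w)"
proof
  assume "(x, y) \<in> (edge_rel F)\<^sup>*"
  then show "\<exists>w. is_walk F x y w"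
  proof (induction rule: rtrancl_induct)
    case base
    have "is_walk F x x [x]"
      by (simp add: is_walk_def)
    then show ?case ..
  next
    case (step y z)
    then obtain w where w: "is_walk F x y w" by blast
    with step(2) have "is_walk F x z (w @ [z])"
      by (auto simp: is_walk_def edge_rel_def walk_edges_append)
    then show ?case ..
  qed
next
  assume "\<exists>w. is_walk F x y w"
  then obtain w where "is_walk F x y w" ..
  then show "(x, y) \<in> (edge_rel F)\<^sup>*"
  proof (induction w arbitrary: x rule: walk_edges.induct)
    case (1 u v w)
    then have "(v, y) \<in> (edge_rel F)\<^sup>*" "(x, v) \<in> edge_rel F"
      by (auto simp: is_walk_def edge_rel_def)
    then show ?case
      by (blast intro: converse_rtrancl_into_rtrancl)
  qed (auto simp: is_walk_def)
qed

section \<open>Counting colourings\<close>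

definition monochromatic :: "('a \<Rightarrow> 'c) \<Rightarrow> 'a set \<Rightarrow> bool" where
  "monochromatic f e \<longleftrightarrow> (\<forall>u\<in>e. \<forall>v\<in>e. f u = f v)"

definition proper_colourings :: "'a set \<Rightarrow> 'c set \<Rightarrow> 'a set set \<Rightarrow> ('a \<Rightarrow> 'c) set" where
  "proper_colourings V B F = {f \<in> V \<rightarrow>\<^sub>E B. \<forall>e\<in>F. \<not> monochromatic f e}"

definition monochromatic_colourings :: "'a set \<Rightarrow> 'c set \<Rightarrow> 'a set set \<Rightarrow> ('a \<Rightarrow> 'c) set" where
  "monochromatic_colourings V B F = {f \<in> V \<rightarrow>\<^sub>E B. \<forall>e\<in>F. monochromatic f e}"

lemma chromatic_poly_eq_card_proper_colourings:
  assumes "sgraph V E"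
  shows "chromatic_poly V E m = card (proper_colourings V {1..m} E)"
proof -
  have "(\<forall>x\<in>V. \<forall>y\<in>V. {x, y} \<in> E \<longrightarrow> f x \<noteq> f y) \<longleftrightarrow> (\<forall>e\<in>E. \<not> monochromatic f e)" for f :: "_ \<Rightarrow> nat"
  proof
    assume "\<forall>x\<in>V. \<forall>y\<in>V. {x, y} \<in> E \<longrightarrow> f x \<noteq> f y"
    moreover have "\<exists>x\<in>V. \<exists>y\<in>V. e = {x, y}" if "e \<in> E" for e
      using assms that unfolding sgraph_def by blast
    ultimately show "\<forall>e\<in>E. \<not> monochromatic f e"
      unfolding monochromatic_def by fastforce
  qed (auto simp: monochromatic_def)
  then show ?thesis
    unfolding chromatic_poly_def proper_colourings_def by simp
qed

lemma proper_colourings_insert_edge: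
  "proper_colourings V B (insert {t, s} H) = {f \<in> proper_colourings V B H. f s \<noteq> f t}"
  by (auto simp: proper_colourings_def monochromatic_def)

lemma walk_monochromatic_const:
  assumes "is_walk F x y w" "\<forall>e\<in>F. monochromatic f e" "z \<in> set w"
  shows "f z = f x"
  using assms
proof (induction w arbitrary: x rule: walk_edges.induct)
  case (1 u v w)
  then have "x = u" "{u, v} \<in> F" "is_walk F v y (v # w)"
    by (auto simp: is_walk_def)
  moreover from this have "f v = f u"
    using 1(3) by (auto simp: monochromatic_def)
  ultimately show ?case
    using 1 by (cases "z = u") auto
qed (auto simp: is_walk_def)

lemma monochromatic_colourings_walk_subset:
  assumes "is_walk F x y w"
  shows "{f \<in> monochromatic_colourings V B F. f x = b} \<subseteq> {f \<in> V \<rightarrow>\<^sub>E B. \<forall>z\<in>set w. f z = b}"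
  using walk_monochromatic_const[OF assms] by (auto simp: monochromatic_colourings_def)

lemma card_PiE_constant_on:
  assumes "finite V" "W \<subseteq> V" "b \<in> B"
  shows "card {f \<in> V \<rightarrow>\<^sub>E B. \<forall>z\<in>W. f z = b} = card B ^ card (V - W)"
proof -
  have "{f \<in> V \<rightarrow>\<^sub>E B. \<forall>z\<in>W. f z = b} = PiE V (\<lambda>z. if z \<in> W then {b} else B)"
    using assms by (auto simp: PiE_iff extensional_def split: if_splits)
  then have "card {f \<in> V \<rightarrow>\<^sub>E B. \<forall>z\<in>W. f z = b} = (\<Prod>z\<in>V. if z \<in> W then 1 else card B)"
    using assms by (auto simp: card_PiE intro!: prod.cong)
  also have "\<dots> = (\<Prod>z\<in>V - W. card B)"
    using assms(1) by (simp add: prod.If_cases Diff_eq)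
  finally show ?thesis
    by simp
qed

text \<open>Forcing the colours at both ends of an edge \<open>{u, v}\<close> to agree costs a factor \<open>card B\<close>:
  recolouring \<open>v\<close> freely is injective on such colourings.\<close>
lemma card_PiE_constant_on_equal_pair_le:
  assumes "finite V" "finite B" "W \<subseteq> V" "b \<in> B" "v \<in> V" "v \<notin> W" "u \<noteq> v"
  shows "card B * card {f \<in> V \<rightarrow>\<^sub>E B. (\<forall>z\<in>W. f z = b) \<and> f v = f u} \<le> card B ^ card (V - W)"
proof -
  let ?S = "{f \<in> V \<rightarrow>\<^sub>E B. (\<forall>z\<in>W. f z = b) \<and> f v = f u}"
  let ?T = "{f \<in> V \<rightarrow>\<^sub>E B. \<forall>z\<in>W. f z = b}"
  let ?recolour = "\<lambda>(f, c). f(v := c)"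
  have "inj_on ?recolour (?S \<times> B)"
  proof (rule inj_onI)
    fix p p' assume "p \<in> ?S \<times> B" "p' \<in> ?S \<times> B" "?recolour p = ?recolour p'"
    moreover obtain f c f' c' where "p = (f, c)" "p' = (f', c')"
      by fastforce
    ultimately have "f \<in> ?S" "f' \<in> ?S" and eq: "f(v := c) = f'(v := c')"
      by auto
    moreover have "f u = f' u"
      using fun_cong[OF eq, of u] \<open>u \<noteq> v\<close> by simp
    ultimately have "f v = f' v"
      by simp
    with eq have "f = f' \<and> c = c'"
      by (metis fun_upd_idem_iff fun_upd_upd fun_upd_same)
    then show "p = p'"
      using \<open>p = (f, c)\<close> \<open>p' = (f', c')\<close> by simp
  qed
  moreover have "?recolour ` (?S \<times> B) \<subseteq> ?T"
    using assms by (auto simp: PiE_iff extensional_def)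
  moreover have "finite ?T"
    using assms by (simp add: finite_PiE)
  ultimately have "card (?S \<times> B) \<le> card ?T"
    by (rule card_inj_on_le)
  then show ?thesis
    using card_PiE_constant_on[OF assms(1,3,4)] by (simp add: card_cartesian_product mult.commute)
qed

lemma int_card_filter_inclusion_exclusion:
  assumes "finite S" "finite F"
  shows "int (card {s \<in> S. \<forall>i\<in>F. \<not> P i s}) =
    (\<Sum>A\<in>Pow F. (-1) ^ card A * int (card {s \<in> S. \<forall>i\<in>A. P i s}))"
proof -
  have indicator_expansion: "(\<Prod>i\<in>F. 1 - of_bool (P i s)) =
      (\<Sum>A\<in>Pow F. (-1) ^ card A * of_bool (\<forall>i\<in>A. P i s) :: int)" for s
  proof -
    have "(\<Prod>i\<in>F. 1 - of_bool (P i s)) = (\<Sum>A\<in>Pow F. (\<Prod>i\<in>A. - of_bool (P i s)) * (\<Prod>i\<in>F - A. 1) :: int)"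
      using prod_add[OF assms(2), of "\<lambda>i. - of_bool (P i s) :: int" "\<lambda>_. 1"] by simp
    also have "\<dots> = (\<Sum>A\<in>Pow F. (-1) ^ card A * of_bool (\<forall>i\<in>A. P i s))"
    proof (rule sum.cong)
      fix A assume "A \<in> Pow F"
      then have "finite A"
        using assms(2) finite_subset by auto
      then show "(\<Prod>i\<in>A. - of_bool (P i s)) * (\<Prod>i\<in>F - A. 1) = (-1) ^ card A * (of_bool (\<forall>i\<in>A. P i s) :: int)"
        by (induction A rule: finite_induct) auto
    qed simp
    finally show ?thesis .
  qed
  have "(\<Prod>i\<in>F. 1 - of_bool (P i s)) = (of_bool (\<forall>i\<in>F. \<not> P i s) :: int)" for s
    using assms(2) by (induction F rule: finite_induct) auto
  then have "int (card {s \<in> S. \<forall>i\<in>F. \<not> P i s}) = (\<Sum>s\<in>S. \<Prod>i\<in>F. 1 - of_bool (P i s))"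
    using assms(1) by (simp add: Collect_conj_eq Int_commute)
  also have "\<dots> = (\<Sum>A\<in>Pow F. (-1) ^ card A * (\<Sum>s\<in>S. of_bool (\<forall>i\<in>A. P i s)))"
    unfolding indicator_expansion sum_distrib_left by (rule sum.swap)
  also have "\<dots> = (\<Sum>A\<in>Pow F. (-1) ^ card A * int (card {s \<in> S. \<forall>i\<in>A. P i s}))"
    using assms(1) by (simp add: Collect_conj_eq Int_commute)
  finally show ?thesis .
qed

text \<open>Exchanging the colours \<open>b\<close> and \<open>c\<close> on the component of \<open>s\<close> in \<open>(V, F)\<close> is an involution that
  keeps every edge of \<open>F\<close> monochromatic and does not touch \<open>t\<close>.\<close>
lemma card_monochromatic_colourings_swap:
  assumes F: "\<forall>e\<in>F. \<exists>x\<in>V. \<exists>y\<in>V. e = {x, y}" and "s \<in> V" "(t, s) \<notin> (edge_rel F)\<^sup>*"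
    and "b \<in> B" "c \<in> B"
  shows "card {f \<in> monochromatic_colourings V B F. f t = a \<and> f s = b} =
    card {f \<in> monochromatic_colourings V B F. f t = a \<and> f s = c}"
proof -
  define R where "R = {z \<in> V. (s, z) \<in> (edge_rel F)\<^sup>*}"
  define swap where "swap x = (if x = b then c else if x = c then b else x)" for x
  define \<phi> where "\<phi> f z = (if z \<in> R then swap (f z) else f z)" for f :: "'a \<Rightarrow> _" and z
  have "t \<notin> R"
    using assms(3) rtrancl_converseI[of s t "edge_rel F"] unfolding R_def edge_rel_converse by blast
  have "s \<in> R"
    using \<open>s \<in> V\<close> unfolding R_def by simp
  have R_closed: "u \<in> R \<longleftrightarrow> v \<in> R" if "e \<in> F" "u \<in> e" "v \<in> e" for e u v
  proof -
    have "u \<in> V" "v \<in> V"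
      using F that by auto
    moreover have "(u, v) \<in> edge_rel F" "(v, u) \<in> edge_rel F" if "u \<noteq> v"
      using F \<open>e \<in> F\<close> \<open>u \<in> e\<close> \<open>v \<in> e\<close> that unfolding edge_rel_def by (fastforce simp: insert_commute)+
    ultimately show ?thesis
      unfolding R_def by (cases "u = v") (auto intro: rtrancl_into_rtrancl)
  qed
  have \<phi>_mono: "\<phi> f \<in> monochromatic_colourings V B F" if "f \<in> monochromatic_colourings V B F" for f
  proof -
    have "swap x \<in> B" if "x \<in> B" for x
      using that \<open>b \<in> B\<close> \<open>c \<in> B\<close> by (simp add: swap_def)
    then have "\<phi> f \<in> V \<rightarrow>\<^sub>E B"
      using that unfolding monochromatic_colourings_def by (auto simp: \<phi>_def R_def PiE_iff extensional_def)
    moreover have "monochromatic (\<phi> f) e" if "e \<in> F" "monochromatic f e" for e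
      using that R_closed unfolding monochromatic_def \<phi>_def by metis
    ultimately show ?thesis
      using that unfolding monochromatic_colourings_def by simp
  qed
  have "\<phi> (\<phi> f) = f" for f
    by (auto simp: \<phi>_def swap_def)
  moreover have "\<phi> f t = f t" "\<phi> f s = swap (f s)" for f
    using \<open>t \<notin> R\<close> \<open>s \<in> R\<close> by (simp_all add: \<phi>_def)
  ultimately have "bij_betw \<phi> {f \<in> monochromatic_colourings V B F. f t = a \<and> f s = b}
      {f \<in> monochromatic_colourings V B F. f t = a \<and> f s = c}"
    using \<phi>_mono by (intro bij_betw_byWitness[where f' = \<phi>]) (auto simp: swap_def)
  then show ?thesis
    by (rule bij_betw_same_card)
qed

section \<open>A shortest path of even order\<close>

locale even_shortest_path =
  fixes V :: "'a set" and H :: "'a set set" and t s :: 'a and p :: "'a list"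
  assumes finite_V: "finite V"
    and edges_H: "\<forall>e\<in>H. \<exists>x\<in>V. \<exists>y\<in>V. x \<noteq> y \<and> e = {x, y}"
    and t_in_V: "t \<in> V"
    and shortest_p: "is_shortest_walk H t s p"
    and even_length_p: "even (length p)"
begin

definition ends_coloured :: "'c set \<Rightarrow> 'a set set \<Rightarrow> 'c \<Rightarrow> 'c \<Rightarrow> ('a \<Rightarrow> 'c) set" where
  "ends_coloured B A a c = {f \<in> monochromatic_colourings V B A. f t = a \<and> f s = c}"

lemma edge_subset_V: "e \<in> H \<Longrightarrow> e \<subseteq> V"
  using edges_H by auto

lemma finite_H: "finite H"
  using finite_subset[of H "Pow V"] edge_subset_V finite_V by blast

lemma walk_subset_V:
  assumes "is_walk A t x w" "A \<subseteq> H"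
  shows "set w \<subseteq> V"
  using walk_set_subset[OF assms(1) t_in_V] edge_subset_V assms(2) by blast

lemma s_in_V: "s \<in> V"
proof -
  have "is_walk H t s p"
    using shortest_p unfolding is_shortest_walk_def by blast
  then show ?thesis
    using walk_subset_V[of H s p] unfolding is_walk_def by auto
qed

lemma card_V_diff_walk:
  assumes "is_shortest_walk A t x w" "A \<subseteq> H"
  shows "card (V - set w) = card V - length w"
proof -
  have "set w \<subseteq> V"
    using assms walk_subset_V unfolding is_shortest_walk_def by blast
  then show ?thesis
    using shortest_walk_distinct[OF assms(1)] by (simp add: card_Diff_subset distinct_card)
qed

lemma length_p_le:
  assumes "is_walk A t s w" "A \<subseteq> H"
  shows "length p \<le> length w"
  using shortest_p is_walk_mono[OF assms] unfolding is_shortest_walk_def by blast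

lemma odd_card_walk_edges:
  assumes "is_shortest_walk H t s w" 
  shows "odd (card (walk_edges w))"
proof -
  have "length w = length p" "w \<noteq> []"
    using assms shortest_p unfolding is_shortest_walk_def is_walk_def by (auto intro: le_antisym)
  then show ?thesis
    using card_walk_edges[OF shortest_walk_distinct[OF assms]] even_length_p by (cases "length w") auto
qed

lemma ends_coloured_connected_eq_empty:
  assumes "(t, s) \<in> (edge_rel A)\<^sup>*" "a \<noteq> c"
  shows "ends_coloured B A a c = {}"
  using assms walk_monochromatic_const[of A t s _ _ s]
  unfolding rtrancl_edge_rel_iff_walk ends_coloured_def monochromatic_colourings_def
  by (fastforce simp: is_walk_def)

lemma card_ends_coloured_disconnected:
  assumes "A \<subseteq> H" "(t, s) \<notin> (edge_rel A)\<^sup>*" "b \<in> B" "c \<in> B"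
  shows "card (ends_coloured B A a b) = card (ends_coloured B A a c)"
proof -
  have "\<forall>e\<in>A. \<exists>x\<in>V. \<exists>y\<in>V. e = {x, y}"
  proof
    fix e assume "e \<in> A"
    then obtain x y where "x \<in> V" "y \<in> V" "e = {x, y}"
      using assms(1) edges_H by blast
    then show "\<exists>x\<in>V. \<exists>y\<in>V. e = {x, y}" by blast
  qed
  then show ?thesis
    unfolding ends_coloured_def by (rule card_monochromatic_colourings_swap[OF _ s_in_V assms(2-4)])
qed

lemma finite_colourings: "finite B \<Longrightarrow> finite {f \<in> V \<rightarrow>\<^sub>E B. P f}"
  using finite_V by (simp add: finite_PiE)

lemma finite_ends_coloured: "finite B \<Longrightarrow> finite (ends_coloured B A a c)"
  using finite_colourings unfolding ends_coloured_def monochromatic_colourings_def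
  by (simp add: finite_PiE finite_V)

lemma card_ends_coloured_walk_le:
  assumes "finite B" "b \<in> B" "is_walk A t s w" "A \<subseteq> H"
  shows "card (ends_coloured B A b b) \<le> card B ^ card (V - set w)"
proof -
  have "ends_coloured B A b b \<subseteq> {f \<in> V \<rightarrow>\<^sub>E B. \<forall>z\<in>set w. f z = b}"
    using monochromatic_colourings_walk_subset[OF assms(3), of V B b] unfolding ends_coloured_def by auto
  then have "card (ends_coloured B A b b) \<le> card {f \<in> V \<rightarrow>\<^sub>E B. \<forall>z\<in>set w. f z = b}"
    by (rule card_mono[OF finite_colourings[OF assms(1)]])
  also have "\<dots> = card B ^ card (V - set w)"
    by (rule card_PiE_constant_on[OF finite_V walk_subset_V[OF assms(3,4)] assms(2)])
  finally show ?thesis .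
qed

lemma card_ends_coloured_path_edges_ge:
  assumes "finite B" "b \<in> B"
  shows "card B ^ card (V - set p) \<le> card (ends_coloured B (walk_edges p) b b)"
proof -
  have p: "is_walk H t s p"
    using shortest_p unfolding is_shortest_walk_def by blast
  then have "t \<in> set p" "s \<in> set p"
    unfolding is_walk_def by auto
  then have "{f \<in> V \<rightarrow>\<^sub>E B. \<forall>z\<in>set p. f z = b} \<subseteq> ends_coloured B (walk_edges p) b b"
    unfolding ends_coloured_def monochromatic_colourings_def monochromatic_def
    by (auto dest!: walk_edge_subset_set) (metis subsetD)
  then have "card {f \<in> V \<rightarrow>\<^sub>E B. \<forall>z\<in>set p. f z = b} \<le> card (ends_coloured B (walk_edges p) b b)"
    by (rule card_mono[OF finite_ends_coloured[OF assms(1)]])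
  moreover have "card {f \<in> V \<rightarrow>\<^sub>E B. \<forall>z\<in>set p. f z = b} = card B ^ card (V - set p)"
    by (rule card_PiE_constant_on[OF finite_V walk_subset_V[OF p order_refl] assms(2)])
  ultimately show ?thesis
    by simp
qed

text \<open>An edge of \<open>A\<close> off a shortest path has an endpoint outside the path (a chord would
  shorten it), so requiring it to be monochromatic costs a further factor \<open>card B\<close>.\<close>
lemma card_ends_coloured_extra_edge_le:
  assumes "finite B" "b \<in> B" and w: "is_shortest_walk H t s w"
    and A: "walk_edges w \<subseteq> A" "A \<subseteq> H" "A \<noteq> walk_edges w"
  shows "card B * card (ends_coloured B A b b) \<le> card B ^ card (V - set w)"
proof -
  obtain e where e: "e \<in> A" "e \<notin> walk_edges w"
    using A by blast
  then obtain x y where xy: "x \<in> V" "y \<in> V" "x \<noteq> y" "e = {x, y}"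
    using A edges_H by blast
  have "x \<notin> set w \<or> y \<notin> set w"
    using shortest_walk_no_chord[OF w] e xy A by blast
  then obtain u v where uv: "v \<in> V" "v \<notin> set w" "u \<noteq> v" "e = {u, v}"
    using xy by (metis insert_commute)
  have walk: "is_walk A t s w"
    using w A unfolding is_shortest_walk_def is_walk_def by auto
  have "ends_coloured B A b b \<subseteq> {f \<in> V \<rightarrow>\<^sub>E B. (\<forall>z\<in>set w. f z = b) \<and> f v = f u}"
  proof
    fix f assume f: "f \<in> ends_coloured B A b b"
    then have "f \<in> V \<rightarrow>\<^sub>E B" "\<forall>z\<in>set w. f z = b"
      using monochromatic_colourings_walk_subset[OF walk, of V B b] unfolding ends_coloured_def by auto
    moreover have "\<forall>e\<in>A. monochromatic f e"
      using f unfolding ends_coloured_def monochromatic_colourings_def by blast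
    then have "f v = f u"
      using e(1) uv(4) unfolding monochromatic_def by blast
    ultimately show "f \<in> {f \<in> V \<rightarrow>\<^sub>E B. (\<forall>z\<in>set w. f z = b) \<and> f v = f u}"
      by blast
  qed
  then have "card (ends_coloured B A b b) \<le> card {f \<in> V \<rightarrow>\<^sub>E B. (\<forall>z\<in>set w. f z = b) \<and> f v = f u}"
    by (rule card_mono[OF finite_colourings[OF assms(1)]])
  then show ?thesis
    using card_PiE_constant_on_equal_pair_le[OF finite_V assms(1) walk_subset_V[OF walk A(2)] assms(2) uv(1-3)]
    by (meson le_trans mult_le_mono2)
qed

lemma int_card_proper_ends_eq:
  assumes "finite B"
  shows "int (card {f \<in> proper_colourings V B H. f t = a \<and> f s = c}) =
    (\<Sum>A\<in>Pow H. (-1) ^ card A * int (card (ends_coloured B A a c)))"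
proof -
  have "{f \<in> proper_colourings V B H. f t = a \<and> f s = c} =
      {f \<in> {f \<in> V \<rightarrow>\<^sub>E B. f t = a \<and> f s = c}. \<forall>e\<in>H. \<not> monochromatic f e}"
    by (auto simp: proper_colourings_def)
  moreover have "ends_coloured B A a c =
      {f \<in> {f \<in> V \<rightarrow>\<^sub>E B. f t = a \<and> f s = c}. \<forall>e\<in>A. monochromatic f e}" for A
    by (auto simp: ends_coloured_def monochromatic_colourings_def)
  moreover note int_card_filter_inclusion_exclusion[OF
      finite_colourings[of B "\<lambda>f. f t = a \<and> f s = c", OF assms] finite_H, of "\<lambda>e f. monochromatic f e"]
  ultimately show ?thesis
    by simp
qed

lemma card_ends_coloured_longer_walk_le:
  assumes "finite B" "b \<in> B" "is_shortest_walk A t s w" "A \<subseteq> H" "length p < length w"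
  shows "card B * card (ends_coloured B A b b) \<le> card B ^ card (V - set p)"
proof -
  have walk: "is_walk A t s w"
    using assms(3) unfolding is_shortest_walk_def by blast
  have "length w \<le> card V"
    using distinct_card[OF shortest_walk_distinct[OF assms(3)]]
      card_mono[OF finite_V walk_subset_V[OF walk assms(4)]] by simp
  then have "Suc (card (V - set w)) \<le> card (V - set p)"
    using assms(5) card_V_diff_walk[OF shortest_p order_refl] card_V_diff_walk[OF assms(3,4)] by simp
  moreover have "0 < card B"
    using assms(1,2) by (auto simp: card_gt_0_iff)
  ultimately have "card B ^ Suc (card (V - set w)) \<le> card B ^ card (V - set p)"
    by (intro power_increasing) auto
  then have "card B * card B ^ card (V - set w) \<le> card B ^ card (V - set p)"
    by simp
  then show ?thesis
    using card_ends_coloured_walk_le[OF assms(1,2) walk assms(4)] by (meson le_trans mult_le_mono2)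
qed

lemma card_ends_coloured_connected_le:
  assumes "finite B" "b \<in> B" "A \<subseteq> H" "A \<noteq> walk_edges p" "(t, s) \<in> (edge_rel A)\<^sup>*"
  shows "card B * card (ends_coloured B A b b) \<le> card B ^ card (V - set p) \<or> odd (card A)"
proof -
  obtain w where w: "is_shortest_walk A t s w"
    using assms(5) shortest_walk_exists unfolding rtrancl_edge_rel_iff_walk by metis
  then have walk: "is_walk A t s w"
    unfolding is_shortest_walk_def by blast
  show ?thesis
  proof (cases "length p < length w")
    case True
    then show ?thesis
      using card_ends_coloured_longer_walk_le[OF assms(1,2) w assms(3)] by simp
  next
    case False
    then have "length w = length p"
      using length_p_le[OF walk assms(3)] by simp
    then have wH: "is_shortest_walk H t s w"
      using shortest_p is_walk_mono[OF walk assms(3)] unfolding is_shortest_walk_def by simp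
    show ?thesis
    proof (cases "A = walk_edges w")
      case True
      then show ?thesis
        using odd_card_walk_edges[OF wH] by simp
    next
      case False
      then show ?thesis
        using card_ends_coloured_extra_edge_le[OF assms(1,2) wH _ assms(3)] walk
          card_V_diff_walk[OF wH order_refl] card_V_diff_walk[OF shortest_p order_refl]
          \<open>length w = length p\<close>
        unfolding is_walk_def by simp
    qed
  qed
qed

lemma ends_coloured_term_le:
  assumes "finite B" "b \<in> B" "c \<in> B" "b \<noteq> c" "A \<subseteq> H" "A \<noteq> walk_edges p"
  shows "int (card B) * ((-1) ^ card A *
      (int (card (ends_coloured B A b b)) - int (card (ends_coloured B A b c))))
    \<le> int (card B) ^ card (V - set p)"
proof (cases "(t, s) \<in> (edge_rel A)\<^sup>*")
  case False
  then show ?thesis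
    using card_ends_coloured_disconnected[OF assms(5) False assms(2,3)] by simp
next
  case True
  then have "ends_coloured B A b c = {}"
    using assms(4) by (rule ends_coloured_connected_eq_empty)
  moreover have "int (card B) * ((-1) ^ card A * int (card (ends_coloured B A b b)))
      \<le> int (card B) ^ card (V - set p)"
    using card_ends_coloured_connected_le[OF assms(1,2,5,6) True]
  proof
    assume "card B * card (ends_coloured B A b b) \<le> card B ^ card (V - set p)"
    then have "int (card B) * int (card (ends_coloured B A b b)) \<le> int (card B) ^ card (V - set p)"
      by (metis of_nat_le_iff of_nat_mult of_nat_power)
    moreover have "(-1) ^ card A * int (card (ends_coloured B A b b)) \<le> int (card (ends_coloured B A b b))"
      by (cases "even (card A)") auto
    ultimately show ?thesis
      by (smt (verit) mult_left_mono of_nat_0_le_iff)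
  next
    assume "odd (card A)"
    then have "(-1) ^ card A * int (card (ends_coloured B A b b)) \<le> 0"
      by simp
    then show ?thesis
      by (smt (verit) mult_nonneg_nonpos of_nat_0_le_iff zero_le_power)
  qed
  ultimately show ?thesis
    by simp
qed

lemma ends_coloured_term_path_edges_le:
  assumes "finite B" "b \<in> B" "b \<noteq> c"
  shows "(-1) ^ card (walk_edges p) *
      (int (card (ends_coloured B (walk_edges p) b b)) - int (card (ends_coloured B (walk_edges p) b c)))
    \<le> - (int (card B) ^ card (V - set p))"
proof -
  have "is_walk (walk_edges p) t s p"
    using shortest_p unfolding is_shortest_walk_def is_walk_def by blast
  then have "(t, s) \<in> (edge_rel (walk_edges p))\<^sup>*"
    unfolding rtrancl_edge_rel_iff_walk by blast
  then have "ends_coloured B (walk_edges p) b c = {}"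
    using assms(3) by (rule ends_coloured_connected_eq_empty)
  then show ?thesis
    using odd_card_walk_edges[OF shortest_p] card_ends_coloured_path_edges_ge[OF assms(1,2)]
    by (simp flip: of_nat_power)
qed

theorem card_proper_ends_equal_less:
  assumes "finite B" "2 ^ card H \<le> card B" "b \<in> B" "c \<in> B" "b \<noteq> c"
  shows "card {f \<in> proper_colourings V B H. f t = b \<and> f s = b}
    < card {f \<in> proper_colourings V B H. f t = b \<and> f s = c}"
proof -
  let ?m = "int (card B)" and ?r = "card (V - set p)" and ?p = "walk_edges p"
  define T where "T A = ?m * ((-1) ^ card A *
      (int (card (ends_coloured B A b b)) - int (card (ends_coloured B A b c))))" for A
  have "?m * (int (card {f \<in> proper_colourings V B H. f t = b \<and> f s = b})
      - int (card {f \<in> proper_colourings V B H. f t = b \<and> f s = c})) = (\<Sum>A\<in>Pow H. T A)"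
    unfolding int_card_proper_ends_eq[OF assms(1)] T_def
    by (simp add: sum_distrib_left sum_subtractf right_diff_distrib)
  also have "\<dots> = T ?p + (\<Sum>A\<in>Pow H - {?p}. T A)"
    using shortest_p finite_H unfolding is_shortest_walk_def is_walk_def by (simp add: sum.remove)
  also have "\<dots> \<le> - (?m * ?m ^ ?r) + int (card (Pow H - {?p})) * ?m ^ ?r"
  proof (rule add_mono)
    show "T ?p \<le> - (?m * ?m ^ ?r)"
      using ends_coloured_term_path_edges_le[OF assms(1,3,5)] unfolding T_def
      by (smt (verit) mult_left_mono of_nat_0_le_iff mult_minus_right)
    show "(\<Sum>A\<in>Pow H - {?p}. T A) \<le> int (card (Pow H - {?p})) * ?m ^ ?r"
      using ends_coloured_term_le[OF assms(1,3,4,5)] unfolding T_def by (intro sum_bounded_above) auto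
  qed
  also have "\<dots> < 0"
  proof -
    have "?p \<in> Pow H"
      using shortest_p unfolding is_shortest_walk_def is_walk_def by simp
    then have "card (Pow H - {?p}) = 2 ^ card H - 1"
      using finite_H by (simp add: card_Pow)
    then have "card (Pow H - {?p}) < card B"
      using assms(2) zero_less_power[of "2::nat" "card H"] by linarith
    moreover have "0 < ?m ^ ?r"
      using assms(1,3) by (auto simp: card_gt_0_iff)
    ultimately have "int (card (Pow H - {?p})) * ?m ^ ?r < ?m * ?m ^ ?r"
      by (intro mult_strict_right_mono) simp_all
    then show ?thesis
      by linarith
  qed
  finally show ?thesis
    by (smt (verit) mult_nonneg_nonneg of_nat_0_le_iff of_nat_less_iff)
qed

lemma card_twisted_colourings_less:
  assumes "finite B" "2 ^ card H \<le> card B" and \<sigma>: "\<sigma> ` B \<subseteq> B" "\<forall>b\<in>B. \<sigma> b \<noteq> b"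
  shows "card {f \<in> proper_colourings V B H. f s \<noteq> \<sigma> (f t)} < card {f \<in> proper_colourings V B H. f s \<noteq> f t}"
proof -
  let ?Q = "proper_colourings V B H"
  have ends_in_B: "f t \<in> B" "f s \<in> B" if "f \<in> ?Q" for f
    using that t_in_V s_in_V unfolding proper_colourings_def by auto
  have partition: "{f \<in> ?Q. f s = g (f t)} = (\<Union>b\<in>B. {f \<in> ?Q. f t = b \<and> f s = g b})" for g
    using ends_in_B by auto
  have card_partition: "card {f \<in> ?Q. f s = g (f t)} = (\<Sum>b\<in>B. card {f \<in> ?Q. f t = b \<and> f s = g b})" for g
    unfolding partition using assms(1) finite_colourings[OF assms(1)]
    by (intro card_UN_disjoint) (auto simp: proper_colourings_def)
  have "card {f \<in> ?Q. f t = b \<and> f s = b} < card {f \<in> ?Q. f t = b \<and> f s = \<sigma> b}" if "b \<in> B" for b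
  proof -
    have "\<sigma> b \<in> B" "b \<noteq> \<sigma> b"
      using \<sigma> that by auto
    then show ?thesis
      by (rule card_proper_ends_equal_less[OF assms(1,2) that])
  qed
  moreover have "B \<noteq> {}"
    using assms(2) by auto
  ultimately have "card {f \<in> ?Q. f s = f t} < card {f \<in> ?Q. f s = \<sigma> (f t)}"
    unfolding card_partition[of id, simplified] card_partition[of \<sigma>]
    using assms(1) by (intro sum_strict_mono) auto
  moreover have "finite ?Q"
    using finite_colourings[OF assms(1)] unfolding proper_colourings_def by simp
  then have complement: "card {f \<in> ?Q. f s \<noteq> g (f t)} + card {f \<in> ?Q. f s = g (f t)} = card ?Q" for g
  proof -
    have "card ?Q = card ({f \<in> ?Q. f s \<noteq> g (f t)} \<union> {f \<in> ?Q. f s = g (f t)})"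
      by (rule arg_cong[where f = card]) auto
    also have "\<dots> = card {f \<in> ?Q. f s \<noteq> g (f t)} + card {f \<in> ?Q. f s = g (f t)}"
      using \<open>finite ?Q\<close> by (intro card_Un_disjoint) auto
    finally show ?thesis ..
  qed
  ultimately show ?thesis
    using complement[of \<sigma>] complement[of "\<lambda>x. x"] by linarith
qed

end

section \<open>Shortest cycles\<close>

lemma cycle_closing_edge:
  assumes "is_cycle V E C"
  shows "{last C, hd C} \<in> E" "last C \<noteq> hd C" "last C \<in> V"
proof -
  have "3 \<le> length C" "distinct C" "set C \<subseteq> V"
    and edge: "\<And>i. i < length C \<Longrightarrow> {C ! i, C ! ((i + 1) mod length C)} \<in> E"
    using assms unfolding is_cycle_def by auto
  then have "C \<noteq> []" "length C - 1 < length C"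
    by auto
  then show "last C \<in> V"
    using \<open>set C \<subseteq> V\<close> by auto
  show "last C \<noteq> hd C"
    using \<open>C \<noteq> []\<close> \<open>3 \<le> length C\<close> nth_eq_iff_index_eq[OF \<open>distinct C\<close>, of "length C - 1" 0]
    by (simp add: last_conv_nth hd_conv_nth)
  show "{last C, hd C} \<in> E"
    using edge[OF \<open>length C - 1 < length C\<close>] \<open>C \<noteq> []\<close> by (simp add: last_conv_nth hd_conv_nth)
qed

lemma cycle_walk_without_closing_edge:
  assumes C: "is_cycle V E C"
  shows "is_walk (E - {{last C, hd C}}) (last C) (hd C) (rev C)"
proof -
  define n where "n = length C"
  have "n \<ge> 3" "distinct C" and edge: "\<And>i. i < n \<Longrightarrow> {C ! i, C ! ((i + 1) mod n)} \<in> E"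
    using C unfolding is_cycle_def n_def by auto
  have C_ne: "C \<noteq> []"
    using \<open>n \<ge> 3\<close> n_def by auto
  have "walk_edges C \<subseteq> E - {{last C, hd C}}"
  proof
    fix e assume "e \<in> walk_edges C"
    then obtain i where i: "Suc i < n" "e = {C ! i, C ! Suc i}"
      unfolding walk_edges_iff_nth n_def by blast
    then have "e \<in> E"
      using edge[of i] by simp
    moreover have "e \<noteq> {C ! (n - 1), C ! 0}"
    proof
      assume "e = {C ! (n - 1), C ! 0}"
      moreover have "i < length C" "Suc i < length C" "n - 1 < length C" "0 < length C"
        using i \<open>n \<ge> 3\<close> unfolding n_def by auto
      ultimately have "(i = n - 1 \<and> Suc i = 0) \<or> (i = 0 \<and> Suc i = n - 1)"
        using i(2) nth_eq_iff_index_eq[OF \<open>distinct C\<close>] by (auto simp: doubleton_eq_iff)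
      then show False
        using \<open>n \<ge> 3\<close> by auto
    qed
    ultimately show "e \<in> E - {{last C, hd C}}"
      using C_ne by (simp add: last_conv_nth hd_conv_nth n_def)
  qed
  then show ?thesis
    using C_ne by (simp add: is_walk_def walk_edges_rev hd_rev last_rev)
qed

lemma shortest_walk_with_closing_edge_is_cycle:
  assumes G: "sgraph V E" and ts: "{t, s} \<in> E" "t \<noteq> s"
    and w: "is_shortest_walk (E - {{t, s}}) t s w"
  shows "is_cycle V E w"
proof -
  have walk: "w \<noteq> []" "hd w = t" "last w = s" "walk_edges w \<subseteq> E - {{t, s}}"
    using w unfolding is_shortest_walk_def is_walk_def by auto
  have edge_V: "e \<subseteq> V" if "e \<in> E" for e
    using G that unfolding sgraph_def by auto
  have "t \<in> V"
    using edge_V[OF ts(1)] by simp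
  then have "set w \<subseteq> V"
    using w walk_set_subset[of "E - {{t, s}}" t s w V] edge_V unfolding is_shortest_walk_def by blast
  have "3 \<le> length w"
    using walk_length_ge_3[of "E - {{t, s}}"] w ts(2) unfolding is_shortest_walk_def by blast
  moreover have "{w ! i, w ! ((i + 1) mod length w)} \<in> E" if "i < length w" for i
  proof (cases "Suc i < length w")
    case True
    then have "{w ! i, w ! Suc i} \<in> walk_edges w"
      unfolding walk_edges_iff_nth by blast
    with True walk(4) show ?thesis
      by auto
  next
    case False
    with that have "i = length w - 1" "i + 1 = length w"
      by auto
    then have "i = length w - 1" "(i + 1) mod length w = 0"
      by simp_all
    then have "w ! i = s" "w ! ((i + 1) mod length w) = t"
      using walk by (auto simp: last_conv_nth hd_conv_nth)
    with ts(1) show ?thesis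
      by (simp add: insert_commute)
  qed
  ultimately show ?thesis
    using shortest_walk_distinct[OF w] \<open>set w \<subseteq> V\<close> unfolding is_cycle_def by blast
qed

lemma even_girth_shortest_path:
  assumes G: "sgraph V E" and "\<exists>C. is_cycle V E C" and "even (girth V E)"
  obtains t s p where "{t, s} \<in> E" "t \<noteq> s" "even_shortest_path V (E - {{t, s}}) t s p"
proof -
  have "girth V E \<in> {length C | C. is_cycle V E C}"
    unfolding girth_def using assms(2) by (intro Inf_nat_def1) auto
  then obtain C where C: "is_cycle V E C" "length C = girth V E"
    by auto
  define t s where "t = last C" and "s = hd C"
  have "{t, s} \<in> E" "t \<noteq> s" "t \<in> V"
    using cycle_closing_edge[OF C(1)] unfolding t_def s_def by simp_all
  have walk: "is_walk (E - {{t, s}}) t s (rev C)"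
    unfolding t_def s_def by (rule cycle_walk_without_closing_edge[OF C(1)])
  have "length (rev C) \<le> length w" if w: "is_walk (E - {{t, s}}) t s w" for w
  proof -
    obtain w0 where w0: "is_shortest_walk (E - {{t, s}}) t s w0"
      using shortest_walk_exists[OF w] .
    then have "girth V E \<le> length w0"
      using shortest_walk_with_closing_edge_is_cycle[OF G \<open>{t, s} \<in> E\<close> \<open>t \<noteq> s\<close> w0]
      unfolding girth_def by (auto intro: cInf_lower)
    then show ?thesis
      using w0 w C(2) unfolding is_shortest_walk_def by fastforce
  qed
  with walk have "is_shortest_walk (E - {{t, s}}) t s (rev C)"
    unfolding is_shortest_walk_def by blast
  moreover have "\<forall>e\<in>E - {{t, s}}. \<exists>x\<in>V. \<exists>y\<in>V. x \<noteq> y \<and> e = {x, y}" "finite V"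
    using G unfolding sgraph_def by (simp_all add: Bex_def) blast
  ultimately have "even_shortest_path V (E - {{t, s}}) t s (rev C)"
    using \<open>t \<in> V\<close> \<open>even (girth V E)\<close> C(2) by unfold_locales simp_all
  with \<open>{t, s} \<in> E\<close> \<open>t \<noteq> s\<close> show ?thesis
    using that by blast
qed

section \<open>The twisted cover\<close>

definition twisted_cover_edges ::
    "'a set \<Rightarrow> 'a set set \<Rightarrow> 'c set \<Rightarrow> ('c \<Rightarrow> 'c) \<Rightarrow> 'a \<Rightarrow> 'a \<Rightarrow> ('a \<times> 'c) set set" where
  "twisted_cover_edges V H B \<sigma> t s =
     {e. (\<exists>u i j. e = {(u, i), (u, j)} \<and> u \<in> V \<and> i \<in> B \<and> j \<in> B \<and> i \<noteq> j)
       \<or> (\<exists>u v i. e = {(u, i), (v, i)} \<and> {u, v} \<in> H \<and> i \<in> B)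
       \<or> (\<exists>i. e = {(t, i), (s, \<sigma> i)} \<and> i \<in> B)}"

lemma twisted_cover_edge_iff:
  "{(u, i), (v, j)} \<in> twisted_cover_edges V H B \<sigma> t s \<longleftrightarrow>
     (u = v \<and> u \<in> V \<and> i \<in> B \<and> j \<in> B \<and> i \<noteq> j) \<or> ({u, v} \<in> H \<and> i = j \<and> i \<in> B) \<or>
     (u = t \<and> v = s \<and> i \<in> B \<and> j = \<sigma> i) \<or> (u = s \<and> v = t \<and> j \<in> B \<and> i = \<sigma> j)"
  unfolding twisted_cover_edges_def by (auto simp: doubleton_eq_iff insert_commute) blast

lemma twisted_cover_edges_between_fibres:
  assumes "e \<in> edges_between (twisted_cover_edges V H B \<sigma> t s) ({u} \<times> B) ({v} \<times> B)" "u \<noteq> v"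
  obtains i j where "e = {(u, i), (v, j)}" "({u, v} \<in> H \<and> i = j \<and> i \<in> B) \<or>
    (u = t \<and> v = s \<and> i \<in> B \<and> j = \<sigma> i) \<or> (u = s \<and> v = t \<and> j \<in> B \<and> i = \<sigma> j)"
  using assms twisted_cover_edge_iff[of u _ v _ V H B \<sigma> t s] unfolding edges_between_def by auto

lemma twisted_cover_matching:
  assumes "{t, s} \<notin> H" "t \<noteq> s" "inj_on \<sigma> B" "u \<noteq> v"
  shows "is_matching (edges_between (twisted_cover_edges V H B \<sigma> t s) ({u} \<times> B) ({v} \<times> B))"
  unfolding is_matching_def
proof (intro ballI impI)
  fix e e' assume e: "e \<in> edges_between (twisted_cover_edges V H B \<sigma> t s) ({u} \<times> B) ({v} \<times> B)"
    and e': "e' \<in> edges_between (twisted_cover_edges V H B \<sigma> t s) ({u} \<times> B) ({v} \<times> B)" and "e \<noteq> e'"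
  obtain i j where ij: "e = {(u, i), (v, j)}" "({u, v} \<in> H \<and> i = j \<and> i \<in> B) \<or>
      (u = t \<and> v = s \<and> i \<in> B \<and> j = \<sigma> i) \<or> (u = s \<and> v = t \<and> j \<in> B \<and> i = \<sigma> j)"
    using twisted_cover_edges_between_fibres[OF e \<open>u \<noteq> v\<close>] by blast
  obtain i' j' where ij': "e' = {(u, i'), (v, j')}" "({u, v} \<in> H \<and> i' = j' \<and> i' \<in> B) \<or>
      (u = t \<and> v = s \<and> i' \<in> B \<and> j' = \<sigma> i') \<or> (u = s \<and> v = t \<and> j' \<in> B \<and> i' = \<sigma> j')"
    using twisted_cover_edges_between_fibres[OF e' \<open>u \<noteq> v\<close>] by blast
  have "{u, v} \<in> H \<longleftrightarrow> \<not> ((u = t \<and> v = s) \<or> (u = s \<and> v = t))"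
    using assms(1,2) ij(2) by (auto simp: insert_commute)
  then have "i = i' \<longleftrightarrow> j = j'"
    using ij(2) ij'(2) assms(2-4) by (auto dest: inj_onD)
  then show "e \<inter> e' = {}"
    using ij(1) ij'(1) \<open>e \<noteq> e'\<close> \<open>u \<noteq> v\<close> by auto
qed

lemma sgraph_twisted_cover:
  assumes G: "sgraph V E" and "H \<subseteq> E" "{t, s} \<in> E" "\<sigma> ` B \<subseteq> B" "finite B"
  shows "sgraph (V \<times> B) (twisted_cover_edges V H B \<sigma> t s)"
proof -
  have E: "x \<noteq> y \<and> x \<in> V \<and> y \<in> V" if "{x, y} \<in> E" for x y
    using G that unfolding sgraph_def by (auto simp: doubleton_eq_iff)
  have "\<exists>x y. x \<noteq> y \<and> x \<in> V \<times> B \<and> y \<in> V \<times> B \<and> e = {x, y}"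
    if "e \<in> twisted_cover_edges V H B \<sigma> t s" for e
  proof -
    from that consider
        (fibre) u i j where "e = {(u, i), (u, j)}" "u \<in> V" "i \<in> B" "j \<in> B" "i \<noteq> j"
      | (lift) u v i where "e = {(u, i), (v, i)}" "{u, v} \<in> H" "i \<in> B"
      | (twist) i where "e = {(t, i), (s, \<sigma> i)}" "i \<in> B"
      unfolding twisted_cover_edges_def by blast
    then show ?thesis
    proof cases
      case (lift u v i)
      then have "u \<noteq> v \<and> u \<in> V \<and> v \<in> V"
        using E[of u v] \<open>H \<subseteq> E\<close> by blast
      with lift show ?thesis
        by blast
    next
      case (twist i)
      then have "\<sigma> i \<in> B"
        using \<open>\<sigma> ` B \<subseteq> B\<close> by blast
      with twist show ?thesis
        using E[OF \<open>{t, s} \<in> E\<close>] by blast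
    qed blast
  qed
  then show ?thesis
    using G \<open>finite B\<close> unfolding sgraph_def by auto
qed

lemma twisted_cover_is_dp_cover:
  assumes G: "sgraph V E" and ts: "{t, s} \<in> E" "t \<noteq> s" and H: "H = E - {{t, s}}"
    and \<sigma>: "\<sigma> ` B \<subseteq> B" "inj_on \<sigma> B" and "finite B"
  shows "dp_cover V E (\<lambda>u. {u} \<times> B) (V \<times> B) (twisted_cover_edges V H B \<sigma> t s)"
proof -
  let ?EH = "twisted_cover_edges V H B \<sigma> t s"
  have "sgraph (V \<times> B) ?EH"
    using sgraph_twisted_cover[OF G _ ts(1) \<sigma>(1) \<open>finite B\<close>] H by blast
  moreover have "u = v \<or> {u, v} \<in> E" if "edges_between ?EH ({u} \<times> B) ({v} \<times> B) \<noteq> {}" for u v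
    using that twisted_cover_edge_iff[of u _ v _ V H B \<sigma> t s] ts(1) H
    unfolding edges_between_def by (auto simp: insert_commute)
  moreover have "is_matching (edges_between ?EH ({u} \<times> B) ({v} \<times> B))" if "{u, v} \<in> E" for u v
  proof -
    have "u \<noteq> v"
      using G that unfolding sgraph_def by (auto simp: doubleton_eq_iff)
    then show ?thesis
      using twisted_cover_matching[OF _ ts(2) \<sigma>(2)] H by blast
  qed
  ultimately show ?thesis
    unfolding dp_cover_def by (auto simp: twisted_cover_edge_iff)
qed

lemma transversal_is_graph:
  assumes "I \<subseteq> V \<times> B" "finite V" "card I = card V" "inj_on fst I"
  obtains f where "f \<in> V \<rightarrow>\<^sub>E B" "I = (\<lambda>u. (u, f u)) ` V"
proof -
  have "fst ` I \<subseteq> V" "card (fst ` I) = card V"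
    using assms by (auto simp: card_image)
  then have fst_I: "fst ` I = V"
    using card_subset_eq[OF assms(2)] by blast
  have unique: "\<exists>!i. (u, i) \<in> I" if u: "u \<in> V" for u
  proof -
    obtain x where "x \<in> I" "fst x = u"
      using u fst_I by force
    then have "(u, snd x) \<in> I"
      by auto
    moreover have "i = j" if "(u, i) \<in> I" "(u, j) \<in> I" for i j
      using inj_onD[OF assms(4) _ that] by simp
    ultimately show ?thesis
      by blast
  qed
  define f where "f u = (if u \<in> V then THE i. (u, i) \<in> I else undefined)" for u
  have graph: "(u, f u) \<in> I" if "u \<in> V" for u
    using theI'[OF unique[OF that]] that unfolding f_def by simp
  then have "f \<in> V \<rightarrow>\<^sub>E B"
    using assms(1) unfolding f_def by (auto simp: PiE_iff extensional_def)
  moreover have "I = (\<lambda>u. (u, f u)) ` V"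
  proof
    show "I \<subseteq> (\<lambda>u. (u, f u)) ` V"
    proof
      fix x assume "x \<in> I"
      then have "fst x \<in> V"
        using fst_I by blast
      then have "x = (fst x, f (fst x))"
        using unique graph \<open>x \<in> I\<close> by (metis prod.collapse)
      with \<open>fst x \<in> V\<close> show "x \<in> (\<lambda>u. (u, f u)) ` V"
        by blast
    qed
  qed (use graph in blast)
  ultimately show ?thesis
    using that by blast
qed

lemma independent_transversal_twisted_cover:
  assumes "finite V" and H: "\<forall>e\<in>H. \<exists>x\<in>V. \<exists>y\<in>V. x \<noteq> y \<and> e = {x, y}" and "t \<in> V" "s \<in> V"
    and I: "I \<subseteq> V \<times> B" "independent (twisted_cover_edges V H B \<sigma> t s) I" "card I = card V"
  obtains f where "f \<in> proper_colourings V B H" "f s \<noteq> \<sigma> (f t)" "I = (\<lambda>u. (u, f u)) ` V"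
proof -
  let ?EH = "twisted_cover_edges V H B \<sigma> t s"
  have no_edge: "{x, y} \<notin> ?EH" if "x \<in> I" "y \<in> I" for x y
    using I(2) that unfolding independent_def by blast
  have "inj_on fst I"
  proof (rule inj_onI)
    fix x y assume "x \<in> I" "y \<in> I" "fst x = fst y"
    with I(1) no_edge[OF \<open>x \<in> I\<close> \<open>y \<in> I\<close>] show "x = y"
      by (cases x; cases y) (auto simp: twisted_cover_edge_iff)
  qed
  then obtain f where f: "f \<in> V \<rightarrow>\<^sub>E B" "I = (\<lambda>u. (u, f u)) ` V"
    using transversal_is_graph[OF I(1) assms(1) I(3)] by blast
  then have no_edge_f: "{(u, f u), (v, f v)} \<notin> ?EH" if "u \<in> V" "v \<in> V" for u v
    using no_edge that by blast
  have "\<forall>e\<in>H. \<not> monochromatic f e"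
  proof (intro ballI notI)
    fix e assume "e \<in> H" "monochromatic f e"
    obtain u v where "u \<in> V" "v \<in> V" "e = {u, v}"
      using H \<open>e \<in> H\<close> by blast
    moreover from this have "f u = f v"
      using \<open>monochromatic f e\<close> unfolding monochromatic_def by blast
    moreover have "f u \<in> B"
      using PiE_mem[OF f(1) \<open>u \<in> V\<close>] .
    ultimately have "{(u, f u), (v, f v)} \<in> ?EH"
      using \<open>e \<in> H\<close> by (simp add: twisted_cover_edge_iff)
    with no_edge_f[OF \<open>u \<in> V\<close> \<open>v \<in> V\<close>] show False ..
  qed
  then have "f \<in> proper_colourings V B H"
    using f(1) unfolding proper_colourings_def by blast
  moreover have "f s \<noteq> \<sigma> (f t)"
  proof
    assume "f s = \<sigma> (f t)"
    moreover have "f t \<in> B"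
      using PiE_mem[OF f(1) \<open>t \<in> V\<close>] .
    ultimately have "{(t, f t), (s, f s)} \<in> ?EH"
      by (simp add: twisted_cover_edge_iff)
    with no_edge_f[OF \<open>t \<in> V\<close> \<open>s \<in> V\<close>] show False ..
  qed
  ultimately show ?thesis
    using f(2) by (rule that)
qed

lemma P_DP_twisted_cover_le:
  assumes "finite V" "finite B" and H: "\<forall>e\<in>H. \<exists>x\<in>V. \<exists>y\<in>V. x \<noteq> y \<and> e = {x, y}"
    and "t \<in> V" "s \<in> V"
  shows "P_DP V (V \<times> B) (twisted_cover_edges V H B \<sigma> t s)
    \<le> card {f \<in> proper_colourings V B H. f s \<noteq> \<sigma> (f t)}"
proof -
  let ?C = "{f \<in> proper_colourings V B H. f s \<noteq> \<sigma> (f t)}"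
  have "{I. I \<subseteq> V \<times> B \<and> independent (twisted_cover_edges V H B \<sigma> t s) I \<and> card I = card V}
      \<subseteq> (\<lambda>f. (\<lambda>u. (u, f u)) ` V) ` ?C"
  proof (rule subsetI, elim CollectE conjE)
    fix I assume I: "I \<subseteq> V \<times> B" "independent (twisted_cover_edges V H B \<sigma> t s) I" "card I = card V"
    obtain f where "f \<in> proper_colourings V B H" "f s \<noteq> \<sigma> (f t)" "I = (\<lambda>u. (u, f u)) ` V"
      using independent_transversal_twisted_cover[OF assms(1) H \<open>t \<in> V\<close> \<open>s \<in> V\<close> I] .
    then show "I \<in> (\<lambda>f. (\<lambda>u. (u, f u)) ` V) ` ?C"
      by blast
  qed
  moreover have "finite ?C"
    using assms(1,2) unfolding proper_colourings_def by (simp add: finite_PiE)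
  ultimately show ?thesis
    unfolding P_DP_def by (meson card_image_le card_mono finite_imageI le_trans)
qed

lemma dp_color_function_le:
  fixes L :: "'a \<Rightarrow> ('a \<times> nat) set"
  assumes "dp_cover V E L VH EH" "m_fold V L m"
  shows "dp_color_function V E m \<le> P_DP V VH EH"
  unfolding dp_color_function_def using assms by (intro cInf_lower bdd_below_bot) blast

lemma dp_color_function_less_chromatic_poly:
  assumes G: "sgraph V E" and ts: "{t, s} \<in> E" "t \<noteq> s"
    and path: "even_shortest_path V (E - {{t, s}}) t s p" and m: "2 ^ card (E - {{t, s}}) < m"
  shows "dp_color_function V E m < chromatic_poly V E m"
proof -
  let ?H = "E - {{t, s}}"
  define \<sigma> where "\<sigma> i = (if i = m then 1 else Suc i)" for i
  have \<sigma>: "\<sigma> ` {1..m} \<subseteq> {1..m}" "inj_on \<sigma> {1..m}" "\<forall>i\<in>{1..m}. \<sigma> i \<noteq> i"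
    using m one_le_power[of "2::nat" "card ?H"] unfolding \<sigma>_def inj_on_def by auto
  have "m_fold V (\<lambda>u. {u} \<times> {1..m}) m"
    unfolding m_fold_def by (simp add: card_cartesian_product_singleton)
  then have "dp_color_function V E m \<le> P_DP V (V \<times> {1..m}) (twisted_cover_edges V ?H {1..m} \<sigma> t s)"
    using dp_color_function_le[OF twisted_cover_is_dp_cover[OF G ts refl \<sigma>(1,2)]] by simp
  also have "\<dots> \<le> card {f \<in> proper_colourings V {1..m} ?H. f s \<noteq> \<sigma> (f t)}"
    by (rule P_DP_twisted_cover_le[OF even_shortest_path.finite_V[OF path] finite_atLeastAtMost
          even_shortest_path.edges_H[OF path] even_shortest_path.t_in_V[OF path]
          even_shortest_path.s_in_V[OF path]])
  also have "\<dots> < card {f \<in> proper_colourings V {1..m} ?H. f s \<noteq> f t}"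
    using m by (intro even_shortest_path.card_twisted_colourings_less[OF path finite_atLeastAtMost _ \<sigma>(1,3)]) simp
  also have "\<dots> = chromatic_poly V E m"
    using chromatic_poly_eq_card_proper_colourings[OF G] proper_colourings_insert_edge ts(1)
    by (metis insert_Diff)
  finally show ?thesis .
qed

theorem mainTheorem1:
  fixes V :: "'a set" and E :: "'a set set"
  assumes "sgraph V E"
    and "connected_graph V E"
    and "\<exists>xs. is_cycle V E xs"
    and "even (girth V E)"
  shows "\<exists>N::nat. \<forall>m\<ge>N. dp_color_function V E m < chromatic_poly V E m"
proof -
  obtain t s p where ts: "{t, s} \<in> E" "t \<noteq> s" and path: "even_shortest_path V (E - {{t, s}}) t s p"
    using even_girth_shortest_path[OF assms(1,3,4)] .
  have "card (E - {{t, s}}) < card E"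
    using ts(1) even_shortest_path.finite_H[OF path] by (intro card_Diff1_less) auto
  then have "2 ^ card (E - {{t, s}}) < m" if "2 ^ card E \<le> m" for m :: nat
    using that power_strict_increasing[of "card (E - {{t, s}})" "card E" "2::nat"] by linarith
  then show ?thesis
    using dp_color_function_less_chromatic_poly[OF assms(1) ts path] by blast
qed

end
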